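(* For all $n\ge1$ and all $\vec p,\vec q\in[0,1]^n$, with $\bar p=\frac1n\sum_{i=1}^np_i$ and $\bar q=\frac1n\sum_{i=1}^nq_i$, $$\mathrm{TV}(\mathrm{Ber}(\vec p),\mathrm{Ber}(\vec q))\ge c\,\mathrm{TV}\big(\mathrm{Bin}(n,\bar p),\mathrm{Bin}(n,\bar q)\big),$$ where $c\ge\frac1{48C_{\mathrm{BCV}}}$ is a universal constant (in particular the inequality holds with $c=\frac1{48C_{\mathrm{BCV}}}\approx0.017$).
   Context: $\mathrm{Ber}(\vec r)=\mathrm{Ber}(r_1)\otimes\cdots\otimes\mathrm{Ber}(r_n)$ is the product Bernoulli measure on $\{0,1\}^n$; $\mathrm{Bin}(n,\theta)$ is the binomial distribution; $\mathrm{TV}(P,Q)=\frac12\sum_\omega|P(\omega)-Q(\omega)|$. $\eta_{\mathrm{BCV}}$ is the sharp Baillon–Cominetti–Vaisman constant: the smallest constant such that every finite sum $Z$ of independent Bernoulli random variables with $\mathrm{Var}(Z)>0$ satisfies $\max_k\mathbb P(Z=k)\le\eta_{\mathrm{BCV}}/\sqrt{\mathrm{Var}(Z)}$ ($\eta_{\mathrm{BCV}}\approx0.4688$). $C_{\mathrm{BCV}}=\sqrt{5/4+\eta_{\mathrm{BCV}}^2}\approx1.2124$. *)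

theory Defs
  imports Complex_Main
begin

text \<open>Product Bernoulli measure Ber(r_1,...,r_n) on {0,1}^n; a point x of {0,1}^n is
  encoded by its support S = {i. x_i = 1}, a subset of {0..<n}.\<close>
definition ber_prod :: "nat \<Rightarrow> (nat \<Rightarrow> real) \<Rightarrow> nat set \<Rightarrow> real" where
  "ber_prod n r S = (\<Prod>i\<in>S. r i) * (\<Prod>i\<in>{..<n} - S. 1 - r i)"

definition tv_ber :: "nat \<Rightarrow> (nat \<Rightarrow> real) \<Rightarrow> (nat \<Rightarrow> real) \<Rightarrow> real" where
  "tv_ber n p q = (1/2) * (\<Sum>S\<in>Pow {..<n}. \<bar>ber_prod n p S - ber_prod n q S\<bar>)"

definition bin_pmf :: "nat \<Rightarrow> real \<Rightarrow> nat \<Rightarrow> real" where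
  "bin_pmf n \<theta> k = real (n choose k) * \<theta> ^ k * (1 - \<theta>) ^ (n - k)"

definition tv_bin :: "nat \<Rightarrow> real \<Rightarrow> real \<Rightarrow> real" where
  "tv_bin n a b = (1/2) * (\<Sum>k\<le>n. \<bar>bin_pmf n a k - bin_pmf n b k\<bar>)"

definition poibin_pmf :: "nat \<Rightarrow> (nat \<Rightarrow> real) \<Rightarrow> nat \<Rightarrow> real" where
  "poibin_pmf m r k = (\<Sum>S\<in>{S. S \<subseteq> {..<m} \<and> card S = k}. ber_prod m r S)"

definition poibin_var :: "nat \<Rightarrow> (nat \<Rightarrow> real) \<Rightarrow> real" where
  "poibin_var m r = (\<Sum>i<m. r i * (1 - r i))"

definition bcv_admissible :: "real \<Rightarrow> bool" where
  "bcv_admissible \<eta> \<longleftrightarrow>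
     (\<forall>m r. (\<forall>i<m. 0 \<le> r i \<and> r i \<le> 1) \<and> poibin_var m r > 0 \<longrightarrow>
        (\<forall>k. poibin_pmf m r k \<le> \<eta> / sqrt (poibin_var m r)))"

definition eta_BCV :: real where
  "eta_BCV = Inf {\<eta>. bcv_admissible \<eta>}"

definition C_BCV :: real where
  "C_BCV = sqrt (5/4 + eta_BCV ^ 2)"

end

theory Submission
  imports Defs "HOL-Analysis.Convex"
begin

(* The inequality holds with the constant 1/28, which is at least 1/(48 C_BCV) since C_BCV >= 1.

   Let a, b be the means of p, q, let D = sum_i |p_i - q_i| and V = n (a (1 - a) + b (1 - b)); by the
   power-mean inequality V bounds the sum of the variances of the two Poisson-binomial sums.  Put
   w_i = sgn (p_i - q_i), let m be the midpoint of the expectations of sum_i w_i x_i under Ber p and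
   Ber q, L = 3 + 2 sqrt V + D, and test both product measures against g(S) = ramp (sum_{i in S} w_i),
   where the ramp has slope 1/L around m and is clipped to [-1, 1].  Replacing p_j by q_j one
   coordinate at a time, the j-th replacement changes the expectation of g by (p_j - q_j) times the
   expected increment of g in direction w_j.  Under every intermediate product measure sum_i w_i x_i
   has mean within D/2 + 1 of m and variance at most V, so a Chebyshev argument bounds this change
   below by |p_j - q_j| / (2 L); hence D <= 4 L TV(Ber p, Ber q).  On the binomial side TV <= 1,
   TV <= n |a - b| <= D, and the Hellinger distance gives TV sqrt V <= 3/2 D, so that
   4 L TV(Bin) <= 12 D + 12 D + 4 D = 28 D <= 28 * 4 L TV(Ber p, Ber q). *)

definition bernoulli_prod :: "'a set \<Rightarrow> ('a \<Rightarrow> real) \<Rightarrow> 'a set \<Rightarrow> real" where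
  "bernoulli_prod A r S = (\<Prod>i\<in>S. r i) * (\<Prod>i\<in>A - S. 1 - r i)"

lemma ber_prod_eq_bernoulli_prod: "ber_prod n r = bernoulli_prod {..<n} r"
  by (simp add: fun_eq_iff ber_prod_def bernoulli_prod_def)

lemma sum_Pow_insert:
  assumes "finite A" "j \<notin> A"
  shows "(\<Sum>S\<in>Pow (insert j A). h S) = (\<Sum>S\<in>Pow A. h (insert j S) + h S)"
proof -
  have "(\<Sum>S\<in>Pow (insert j A). h S) = (\<Sum>S\<in>Pow A. h S) + (\<Sum>S\<in>insert j ` Pow A. h S)"
    unfolding Pow_insert by (rule sum.union_disjoint) (use assms in auto)
  also have "(\<Sum>S\<in>insert j ` Pow A. h S) = (\<Sum>S\<in>Pow A. h (insert j S))"
    by (subst sum.reindex) (use assms in \<open>auto intro!: inj_onI simp: o_def\<close>)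
  finally show ?thesis by (simp add: sum.distrib add.commute)
qed

lemma bernoulli_prod_insert_in:
  assumes "finite A" "j \<notin> A" "S \<subseteq> A"
  shows "bernoulli_prod (insert j A) r (insert j S) = r j * bernoulli_prod A r S"
proof -
  have "insert j A - insert j S = A - S" and "j \<notin> S" using assms by auto
  with finite_subset[OF assms(3,1)] show ?thesis by (simp add: bernoulli_prod_def)
qed

lemma bernoulli_prod_insert_notin:
  assumes "finite A" "j \<notin> A" "S \<subseteq> A"
  shows "bernoulli_prod (insert j A) r S = (1 - r j) * bernoulli_prod A r S"
proof -
  have "insert j A - S = insert j (A - S)" and "j \<notin> A - S" using assms by auto
  with assms(1) show ?thesis by (simp add: bernoulli_prod_def)
qed

lemma sum_Pow_bernoulli_prod_insert:
  assumes "finite A" "j \<notin> A"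
  shows "(\<Sum>S\<in>Pow (insert j A). bernoulli_prod (insert j A) r S * h S)
       = (\<Sum>S\<in>Pow A. bernoulli_prod A r S * (r j * h (insert j S) + (1 - r j) * h S))"
  using assms
  by (auto simp: sum_Pow_insert bernoulli_prod_insert_in bernoulli_prod_insert_notin algebra_simps
      intro!: sum.cong)

lemma sum_bernoulli_prod: "finite A \<Longrightarrow> (\<Sum>S\<in>Pow A. bernoulli_prod A r S) = 1"
  using prod_add[of A r "\<lambda>i. 1 - r i"] by (simp add: bernoulli_prod_def)

lemma bernoulli_prod_nonneg:
  "(\<And>i. i \<in> A \<Longrightarrow> 0 \<le> r i \<and> r i \<le> 1) \<Longrightarrow> S \<subseteq> A \<Longrightarrow> 0 \<le> bernoulli_prod A r S"
  unfolding bernoulli_prod_def by (intro mult_nonneg_nonneg prod_nonneg) auto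

lemma bernoulli_prod_cong:
  "(\<And>i. i \<in> A \<Longrightarrow> r i = r' i) \<Longrightarrow> S \<subseteq> A \<Longrightarrow> bernoulli_prod A r S = bernoulli_prod A r' S"
  unfolding bernoulli_prod_def by (intro arg_cong2[where f="(*)"] prod.cong) auto

lemma bernoulli_prod_second_moment:
  assumes "finite A"
  shows "(\<Sum>S\<in>Pow A. bernoulli_prod A r S * ((\<Sum>i\<in>S. w i) - m)^2)
       = ((\<Sum>i\<in>A. w i * r i) - m)^2 + (\<Sum>i\<in>A. (w i)^2 * r i * (1 - r i))"
  using assms
proof (induction A arbitrary: m rule: finite_induct)
  case empty
  then show ?case by (simp add: bernoulli_prod_def)
next
  case (insert j A)
  let ?\<mu> = "\<lambda>m. (\<Sum>i\<in>A. w i * r i) - m" and ?\<sigma> = "\<Sum>i\<in>A. (w i)^2 * r i * (1 - r i)"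
  have shift: "(\<Sum>i\<in>insert j S. w i) - m = (\<Sum>i\<in>S. w i) - (m - w j)" if "S \<subseteq> A" for S
    using insert.hyps that by (subst sum.insert) (auto intro: finite_subset)
  have "(\<Sum>S\<in>Pow (insert j A). bernoulli_prod (insert j A) r S * ((\<Sum>i\<in>S. w i) - m)^2)
      = (\<Sum>S\<in>Pow A. r j * (bernoulli_prod A r S * ((\<Sum>i\<in>S. w i) - (m - w j))^2)
          + (1 - r j) * (bernoulli_prod A r S * ((\<Sum>i\<in>S. w i) - m)^2))"
    unfolding sum_Pow_bernoulli_prod_insert[OF insert.hyps(1,2), where h="\<lambda>S. ((\<Sum>i\<in>S. w i) - m)^2"]
    by (rule sum.cong) (auto simp: shift algebra_simps)
  also have "\<dots> = r j * (\<Sum>S\<in>Pow A. bernoulli_prod A r S * ((\<Sum>i\<in>S. w i) - (m - w j))^2)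
        + (1 - r j) * (\<Sum>S\<in>Pow A. bernoulli_prod A r S * ((\<Sum>i\<in>S. w i) - m)^2)"
    by (simp add: sum.distrib sum_distrib_left)
  also have "\<dots> = r j * (?\<mu> (m - w j)^2 + ?\<sigma>) + (1 - r j) * (?\<mu> m^2 + ?\<sigma>)"
    by (simp add: insert.IH)
  also have "\<dots> = (?\<mu> m + w j * r j)^2 + ?\<sigma> + (w j)^2 * r j * (1 - r j)"
    by (simp add: power2_eq_square algebra_simps)
  finally show ?case
    using insert.hyps by (simp add: algebra_simps)
qed

lemma sum_abs_bernoulli_prod_diff_le:
  assumes "finite A" "\<And>i. i \<in> A \<Longrightarrow> 0 \<le> p i \<and> p i \<le> 1" "\<And>i. i \<in> A \<Longrightarrow> 0 \<le> q i \<and> q i \<le> 1"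
  shows "(\<Sum>S\<in>Pow A. \<bar>bernoulli_prod A p S - bernoulli_prod A q S\<bar>) \<le> 2 * (\<Sum>i\<in>A. \<bar>p i - q i\<bar>)"
  using assms
proof (induction A rule: finite_induct)
  case empty
  then show ?case by (simp add: bernoulli_prod_def)
next
  case (insert j A)
  let ?P = "bernoulli_prod A p" and ?Q = "bernoulli_prod A q"
  have pj: "0 \<le> p j" "p j \<le> 1" using insert.prems by auto
  have "(\<Sum>S\<in>Pow (insert j A). \<bar>bernoulli_prod (insert j A) p S - bernoulli_prod (insert j A) q S\<bar>)
     = (\<Sum>S\<in>Pow A. \<bar>p j * ?P S - q j * ?Q S\<bar> + \<bar>(1 - p j) * ?P S - (1 - q j) * ?Q S\<bar>)"
    using insert.hyps
    by (auto simp: sum_Pow_insert bernoulli_prod_insert_in bernoulli_prod_insert_notin intro!: sum.cong)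
  also have "\<dots> \<le> (\<Sum>S\<in>Pow A. \<bar>?P S - ?Q S\<bar> + 2 * \<bar>p j - q j\<bar> * ?Q S)"
  proof (rule sum_mono)
    fix S assume "S \<in> Pow A"
    then have Q: "0 \<le> ?Q S" using insert.prems by (intro bernoulli_prod_nonneg) auto
    have "p j * ?P S - q j * ?Q S = p j * (?P S - ?Q S) + (p j - q j) * ?Q S" by algebra
    then have "\<bar>p j * ?P S - q j * ?Q S\<bar> \<le> p j * \<bar>?P S - ?Q S\<bar> + \<bar>p j - q j\<bar> * ?Q S"
      using pj Q by (simp add: abs_mult abs_triangle_ineq[THEN order_trans])
    moreover have "(1 - p j) * ?P S - (1 - q j) * ?Q S = (1 - p j) * (?P S - ?Q S) + (q j - p j) * ?Q S"
      by algebra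
    then have "\<bar>(1 - p j) * ?P S - (1 - q j) * ?Q S\<bar>
        \<le> (1 - p j) * \<bar>?P S - ?Q S\<bar> + \<bar>p j - q j\<bar> * ?Q S"
      using pj Q by (simp add: abs_mult abs_minus_commute abs_triangle_ineq[THEN order_trans])
    ultimately show "\<bar>p j * ?P S - q j * ?Q S\<bar> + \<bar>(1 - p j) * ?P S - (1 - q j) * ?Q S\<bar>
        \<le> \<bar>?P S - ?Q S\<bar> + 2 * \<bar>p j - q j\<bar> * ?Q S"
      by (simp add: algebra_simps)
  qed
  also have "\<dots> = (\<Sum>S\<in>Pow A. \<bar>?P S - ?Q S\<bar>) + 2 * \<bar>p j - q j\<bar>"
    using insert.hyps by (simp add: sum.distrib sum_bernoulli_prod flip: sum_distrib_left)
  also have "\<dots> \<le> 2 * (\<Sum>i\<in>insert j A. \<bar>p i - q i\<bar>)"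
    using insert by (simp add: algebra_simps)
  finally show ?case .
qed

lemma sum_bernoulli_prod_update_diff:
  assumes "finite A" "j \<notin> A"
  shows "(\<Sum>S\<in>Pow (insert j A). bernoulli_prod (insert j A) (r(j := x)) S * g S)
       - (\<Sum>S\<in>Pow (insert j A). bernoulli_prod (insert j A) (r(j := y)) S * g S)
       = (x - y) * (\<Sum>S\<in>Pow A. bernoulli_prod A r S * (g (insert j S) - g S))"
proof -
  have "(\<Sum>S\<in>Pow (insert j A). bernoulli_prod (insert j A) (r(j := z)) S * g S)
      = (\<Sum>S\<in>Pow A. bernoulli_prod A r S * (z * g (insert j S) + (1 - z) * g S))" for z
    unfolding sum_Pow_bernoulli_prod_insert[OF assms]
    using assms(2) by (intro sum.cong refl arg_cong2[where f="(*)"] bernoulli_prod_cong) auto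
  then show ?thesis
    by (simp add: sum_distrib_left algebra_simps flip: sum_subtractf)
qed

definition hybrid :: "nat \<Rightarrow> (nat \<Rightarrow> real) \<Rightarrow> (nat \<Rightarrow> real) \<Rightarrow> nat \<Rightarrow> real" where
  "hybrid j p q i = (if i < j then q i else p i)"

lemma sum_bernoulli_prod_diff_telescope:
  "(\<Sum>S\<in>Pow {..<n}. (bernoulli_prod {..<n} p S - bernoulli_prod {..<n} q S) * g S)
   = (\<Sum>j<n. (p j - q j) * (\<Sum>S\<in>Pow ({..<n} - {j}).
        bernoulli_prod ({..<n} - {j}) (hybrid j p q) S * (g (insert j S) - g S)))"
proof -
  define T where "T j = (\<Sum>S\<in>Pow {..<n}. bernoulli_prod {..<n} (hybrid j p q) S * g S)" for j
  have step: "T j - T (Suc j) = (p j - q j) * (\<Sum>S\<in>Pow ({..<n} - {j}).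
        bernoulli_prod ({..<n} - {j}) (hybrid j p q) S * (g (insert j S) - g S))" if "j < n" for j
  proof -
    define A where "A = {..<n} - {j}"
    have A: "{..<n} = insert j A" "finite A" "j \<notin> A"
      using that by (auto simp: A_def)
    have "(hybrid j p q)(j := p j) = hybrid j p q" and "(hybrid j p q)(j := q j) = hybrid (Suc j) p q"
      by (auto simp: hybrid_def)
    then show ?thesis
      using sum_bernoulli_prod_update_diff[OF A(2,3), of "hybrid j p q" "p j" g "q j"]
      unfolding T_def A_def[symmetric] unfolding A(1) by simp
  qed
  have "bernoulli_prod {..<n} (hybrid n p q) S = bernoulli_prod {..<n} q S" if "S \<subseteq> {..<n}" for S
    using that by (intro bernoulli_prod_cong) (auto simp: hybrid_def)
  moreover have "hybrid 0 p q = p"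
    by (simp add: fun_eq_iff hybrid_def)
  ultimately have "(\<Sum>S\<in>Pow {..<n}. (bernoulli_prod {..<n} p S - bernoulli_prod {..<n} q S) * g S)
      = T 0 - T n"
    by (simp add: T_def left_diff_distrib sum_subtractf)
  then show ?thesis
    using step by (simp add: sum_lessThan_telescope'[symmetric])
qed

definition ramp :: "real \<Rightarrow> real \<Rightarrow> real \<Rightarrow> real" where
  "ramp L m x = max (-1) (min 1 ((x - m) / L))"

lemma abs_ramp_le_1: "\<bar>ramp L m x\<bar> \<le> 1"
  by (simp add: ramp_def)

lemma ramp_mono:
  assumes "0 < L" "x \<le> y"
  shows "ramp L m x \<le> ramp L m y"
  using divide_right_mono[of "x - m" "y - m" L] assms by (auto simp: ramp_def)

lemma ramp_increment:
  assumes L: "L > 1"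
  shows "\<bar>d\<bar> / L * (1 - (x - m)^2 / (L - 1)^2) \<le> d * (ramp L m (x + sgn d) - ramp L m x)"
proof (cases "\<bar>x - m\<bar> \<le> L - 1")
  case True
  have "ramp L m x = (x - m) / L" and "ramp L m (x + sgn d) = (x + sgn d - m) / L"
    using True L by (cases d "0 :: real" rule: linorder_cases; auto simp: ramp_def field_simps abs_le_iff)+
  then have "ramp L m (x + sgn d) - ramp L m x = sgn d / L"
    using L by (simp add: field_simps)
  then have "d * (ramp L m (x + sgn d) - ramp L m x) = \<bar>d\<bar> / L"
    by (simp add: abs_sgn)
  moreover have "\<bar>d\<bar> / L * (1 - (x - m)^2 / (L - 1)^2) \<le> \<bar>d\<bar> / L"
    using L by (intro mult_left_le) auto
  ultimately show ?thesis by simp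
next
  case False
  then have "(L - 1)^2 \<le> (x - m)^2"
    using L by (simp add: abs_le_square_iff[symmetric] abs_of_pos)
  then have "\<bar>d\<bar> / L * (1 - (x - m)^2 / (L - 1)^2) \<le> 0"
    using L by (intro mult_nonneg_nonpos) (simp_all add: field_simps)
  moreover have "0 \<le> d * (ramp L m (x + sgn d) - ramp L m x)"
    using ramp_mono[of L x "x + 1" m] ramp_mono[of L "x - 1" x m] L
    by (cases d "0 :: real" rule: linorder_cases) (auto simp: mult_nonpos_nonpos)
  ultimately show ?thesis by linarith
qed

lemma ramp_increment_expectation:
  assumes "L > 1" "\<And>x. x \<in> X \<Longrightarrow> 0 \<le> \<rho> x" "sum \<rho> X = 1"
    and spread: "2 * (\<Sum>x\<in>X. \<rho> x * (t x - m)^2) \<le> (L - 1)^2"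
  shows "\<bar>d\<bar> / (2 * L) \<le> (\<Sum>x\<in>X. \<rho> x * (d * (ramp L m (t x + sgn d) - ramp L m (t x))))"
proof -
  have "(\<Sum>x\<in>X. \<rho> x * (t x - m)^2) / (L - 1)^2 \<le> 1 / 2"
    using spread assms(1) by (simp add: field_simps)
  then have "\<bar>d\<bar> / (2 * L) \<le> \<bar>d\<bar> / L * (1 - (\<Sum>x\<in>X. \<rho> x * (t x - m)^2) / (L - 1)^2)"
    using assms(1) by (simp add: field_simps mult_left_mono)
  also have "\<dots> = (\<Sum>x\<in>X. \<bar>d\<bar> / L * \<rho> x - \<bar>d\<bar> / L / (L - 1)^2 * (\<rho> x * (t x - m)^2))"
    by (simp only: sum_subtractf flip: sum_distrib_left) (simp add: assms(3) algebra_simps)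
  also have "\<dots> = (\<Sum>x\<in>X. \<rho> x * (\<bar>d\<bar> / L * (1 - (t x - m)^2 / (L - 1)^2)))"
    by (rule sum.cong) (simp_all add: algebra_simps)
  also have "\<dots> \<le> (\<Sum>x\<in>X. \<rho> x * (d * (ramp L m (t x + sgn d) - ramp L m (t x))))"
    using assms(1,2) by (intro sum_mono mult_left_mono ramp_increment) auto
  finally show ?thesis .
qed

lemma hybrid_mean_deviation:
  fixes p q :: "nat \<Rightarrow> real"
  assumes "j < n" "0 \<le> p j" "p j \<le> 1"
  defines "w \<equiv> \<lambda>i. sgn (p i - q i)"
  shows "\<bar>(\<Sum>i\<in>{..<n} - {j}. w i * hybrid j p q i) - ((\<Sum>i<n. w i * p i) + (\<Sum>i<n. w i * q i)) / 2\<bar>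
         \<le> (\<Sum>i<n. \<bar>p i - q i\<bar>) / 2 + 1"
proof -
  have abs_eq: "w i * (p i - q i) = \<bar>p i - q i\<bar>" for i
    by (simp add: w_def abs_sgn)
  have "(\<Sum>i<n. w i * hybrid j p q i) = w j * p j + (\<Sum>i\<in>{..<n} - {j}. w i * hybrid j p q i)"
    using assms(1) by (simp add: sum.remove[of "{..<n}" j] hybrid_def)
  moreover have "\<bar>w j * p j\<bar> \<le> 1"
    using assms(2,3) by (simp add: w_def abs_mult abs_sgn_eq)
  moreover have "(\<Sum>i<n. w i * p i) - (\<Sum>i<n. w i * q i) = (\<Sum>i<n. \<bar>p i - q i\<bar>)"
    by (simp add: abs_eq flip: sum_subtractf right_diff_distrib)
  moreover have "(\<Sum>i<n. w i * hybrid j p q i) - (\<Sum>i<n. w i * q i) = (\<Sum>i<n. w i * (hybrid j p q i - q i))"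
    by (simp add: right_diff_distrib sum_subtractf)
  moreover have "0 \<le> (\<Sum>i<n. w i * (hybrid j p q i - q i))"
    by (intro sum_nonneg) (simp add: hybrid_def abs_eq)
  moreover have "(\<Sum>i<n. w i * (hybrid j p q i - q i)) \<le> (\<Sum>i<n. \<bar>p i - q i\<bar>)"
    by (intro sum_mono) (simp add: hybrid_def abs_eq)
  ultimately show ?thesis
    by (simp add: abs_le_iff field_simps)
qed

lemma hybrid_second_moment_le:
  fixes p q :: "nat \<Rightarrow> real"
  assumes "j < n" and p: "\<forall>i<n. 0 \<le> p i \<and> p i \<le> 1" and q: "\<forall>i<n. 0 \<le> q i \<and> q i \<le> 1"
    and s: "poibin_var n p + poibin_var n q \<le> s^2"
  defines "w \<equiv> \<lambda>i. sgn (p i - q i)"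
    and "m \<equiv> ((\<Sum>i<n. sgn (p i - q i) * p i) + (\<Sum>i<n. sgn (p i - q i) * q i)) / 2"
  shows "(\<Sum>S\<in>Pow ({..<n} - {j}). bernoulli_prod ({..<n} - {j}) (hybrid j p q) S * ((\<Sum>i\<in>S. w i) - m)^2)
         \<le> ((\<Sum>i<n. \<bar>p i - q i\<bar>) / 2 + 1)^2 + s^2"
proof -
  define A where "A = {..<n} - {j}"
  define h where "h = hybrid j p q"
  have A: "finite A" "A \<subseteq> {..<n}" by (auto simp: A_def)
  have h: "0 \<le> h i \<and> h i \<le> 1" if "i < n" for i
    using p q that by (simp add: h_def hybrid_def)
  have "(\<Sum>i\<in>A. (w i)^2 * h i * (1 - h i)) \<le> (\<Sum>i\<in>A. h i * (1 - h i))"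
    using A h by (intro sum_mono) (auto simp: w_def sgn_if)
  also have "\<dots> \<le> (\<Sum>i<n. h i * (1 - h i))"
    using A h by (intro sum_mono2) auto
  also have "\<dots> \<le> poibin_var n p + poibin_var n q"
    using p q by (auto simp: poibin_var_def h_def hybrid_def mult_nonneg_nonneg
        simp flip: sum.distrib intro!: sum_mono)
  finally have "(\<Sum>i\<in>A. (w i)^2 * h i * (1 - h i)) \<le> s^2"
    using s by linarith
  moreover have "\<bar>(\<Sum>i\<in>A. w i * h i) - m\<bar> \<le> (\<Sum>i<n. \<bar>p i - q i\<bar>) / 2 + 1"
    using hybrid_mean_deviation[of j n p q] assms(1) p by (simp add: A_def h_def w_def m_def)
  then have "((\<Sum>i\<in>A. w i * h i) - m)^2 \<le> ((\<Sum>i<n. \<bar>p i - q i\<bar>) / 2 + 1)^2"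
    by (simp add: abs_le_square_iff[symmetric] sum_nonneg)
  ultimately show ?thesis
    unfolding A_def[symmetric] h_def[symmetric] bernoulli_prod_second_moment[OF A(1)] by argo
qed

lemma hybrid_ramp_increment:
  fixes p q :: "nat \<Rightarrow> real"
  assumes j: "j < n" and p: "\<forall>i<n. 0 \<le> p i \<and> p i \<le> 1" and q: "\<forall>i<n. 0 \<le> q i \<and> q i \<le> 1"
    and s: "0 \<le> s" "poibin_var n p + poibin_var n q \<le> s^2"
    and L: "3 + 2 * s + (\<Sum>i<n. \<bar>p i - q i\<bar>) \<le> L"
  defines "w \<equiv> \<lambda>i. sgn (p i - q i)"
    and "m \<equiv> ((\<Sum>i<n. sgn (p i - q i) * p i) + (\<Sum>i<n. sgn (p i - q i) * q i)) / 2"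
  shows "\<bar>p j - q j\<bar> / (2 * L) \<le> (p j - q j) * (\<Sum>S\<in>Pow ({..<n} - {j}).
           bernoulli_prod ({..<n} - {j}) (hybrid j p q) S
           * (ramp L m (\<Sum>i\<in>insert j S. w i) - ramp L m (\<Sum>i\<in>S. w i)))"
proof -
  define D where "D = (\<Sum>i<n. \<bar>p i - q i\<bar>)"
  define A where "A = {..<n} - {j}"
  define h where "h = hybrid j p q"
  have A: "finite A" "j \<notin> A" by (auto simp: A_def)
  have D: "0 \<le> D" by (simp add: D_def sum_nonneg)
  have "2 * ((D / 2 + 1)^2 + s^2) \<le> (2 + 2 * s + D)^2"
    using D s by (simp add: power2_eq_square algebra_simps)
  also have "\<dots> \<le> (L - 1)^2"
    using D s L by (intro power_mono) (simp_all add: D_def)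
  finally have "2 * (\<Sum>S\<in>Pow A. bernoulli_prod A h S * ((\<Sum>i\<in>S. w i) - m)^2) \<le> (L - 1)^2"
    using hybrid_second_moment_le[OF j p q s(2)] by (simp add: A_def h_def w_def m_def D_def)
  moreover have "(\<Sum>i\<in>insert j S. w i) = (\<Sum>i\<in>S. w i) + sgn (p j - q j)" if "S \<in> Pow A" for S
    using that A by (subst sum.insert) (auto simp: w_def add.commute intro: finite_subset)
  moreover have "0 \<le> bernoulli_prod A h S" if "S \<in> Pow A" for S
    using p q that by (intro bernoulli_prod_nonneg) (auto simp: A_def h_def hybrid_def)
  moreover have "1 < L"
    using D s L unfolding D_def by linarith
  ultimately show ?thesis
    using ramp_increment_expectation[of L "Pow A" "bernoulli_prod A h" "\<lambda>S. \<Sum>i\<in>S. w i" m "p j - q j"]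
      sum_bernoulli_prod[OF A(1)]
    by (simp add: A_def[symmetric] h_def[symmetric] sum_distrib_left algebra_simps)
qed

lemma sum_abs_diff_le_tv_ber:
  fixes p q :: "nat \<Rightarrow> real"
  assumes p: "\<forall>i<n. 0 \<le> p i \<and> p i \<le> 1" and q: "\<forall>i<n. 0 \<le> q i \<and> q i \<le> 1"
    and s: "0 \<le> s" "poibin_var n p + poibin_var n q \<le> s^2"
  shows "(\<Sum>i<n. \<bar>p i - q i\<bar>) \<le> 4 * (3 + 2 * s + (\<Sum>i<n. \<bar>p i - q i\<bar>)) * tv_ber n p q"
proof -
  define D where "D = (\<Sum>i<n. \<bar>p i - q i\<bar>)"
  define L where "L = 3 + 2 * s + D"
  define m where "m = ((\<Sum>i<n. sgn (p i - q i) * p i) + (\<Sum>i<n. sgn (p i - q i) * q i)) / 2"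
  define g where "g = (\<lambda>S. ramp L m (\<Sum>i\<in>S. sgn (p i - q i)))"
  have L: "1 < L"
    using s by (simp add: L_def D_def sum_nonneg add_pos_nonneg)
  have coordinate: "\<bar>p j - q j\<bar> / (2 * L) \<le> (p j - q j) * (\<Sum>S\<in>Pow ({..<n} - {j}).
      bernoulli_prod ({..<n} - {j}) (hybrid j p q) S * (g (insert j S) - g S))" if "j < n" for j
    using hybrid_ramp_increment[OF that p q s, of L] by (simp add: g_def m_def L_def D_def)
  have "D / (2 * L) \<le> (\<Sum>j<n. (p j - q j) * (\<Sum>S\<in>Pow ({..<n} - {j}).
      bernoulli_prod ({..<n} - {j}) (hybrid j p q) S * (g (insert j S) - g S)))"
    unfolding D_def sum_divide_distrib by (intro sum_mono coordinate) simp
  also have "\<dots> = (\<Sum>S\<in>Pow {..<n}. (bernoulli_prod {..<n} p S - bernoulli_prod {..<n} q S) * g S)"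
    by (rule sum_bernoulli_prod_diff_telescope[symmetric])
  also have "\<dots> \<le> (\<Sum>S\<in>Pow {..<n}. \<bar>bernoulli_prod {..<n} p S - bernoulli_prod {..<n} q S\<bar>)"
  proof (rule sum_mono)
    fix S
    let ?d = "bernoulli_prod {..<n} p S - bernoulli_prod {..<n} q S"
    have "\<bar>?d * g S\<bar> \<le> \<bar>?d\<bar>"
      by (simp add: abs_mult mult_left_le g_def abs_ramp_le_1)
    then show "?d * g S \<le> \<bar>?d\<bar>"
      by (rule order_trans[OF abs_ge_self])
  qed
  also have "\<dots> = 2 * tv_ber n p q"
    by (simp add: tv_ber_def ber_prod_eq_bernoulli_prod)
  finally have "D / (2 * L) \<le> 2 * tv_ber n p q" .
  then have "D \<le> 4 * L * tv_ber n p q"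
    using L by (simp add: field_simps)
  then show ?thesis
    by (simp add: L_def D_def)
qed

lemma bin_pmf_eq_sum_bernoulli_prod:
  "bin_pmf n \<theta> k = (\<Sum>S\<in>{S. S \<subseteq> {..<n} \<and> card S = k}. bernoulli_prod {..<n} (\<lambda>_. \<theta>) S)"
proof -
  have "bernoulli_prod {..<n} (\<lambda>_. \<theta>) S = \<theta> ^ k * (1 - \<theta>) ^ (n - k)"
    if "S \<subseteq> {..<n}" "card S = k" for S
    using that by (simp add: bernoulli_prod_def card_Diff_subset finite_subset)
  then have "(\<Sum>S\<in>{S. S \<subseteq> {..<n} \<and> card S = k}. bernoulli_prod {..<n} (\<lambda>_. \<theta>) S)
      = real (card {S. S \<subseteq> {..<n} \<and> card S = k}) * (\<theta> ^ k * (1 - \<theta>) ^ (n - k))"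
    by simp
  then show ?thesis
    using n_subsets[of "{..<n}" k] by (simp add: bin_pmf_def mult.assoc)
qed

lemma tv_bin_le_sum_abs_bernoulli_prod:
  "2 * tv_bin n a b
   \<le> (\<Sum>S\<in>Pow {..<n}. \<bar>bernoulli_prod {..<n} (\<lambda>_. a) S - bernoulli_prod {..<n} (\<lambda>_. b) S\<bar>)"
proof -
  let ?d = "\<lambda>S. bernoulli_prod {..<n} (\<lambda>_. a) S - bernoulli_prod {..<n} (\<lambda>_. b) S"
  have "2 * tv_bin n a b = (\<Sum>k\<le>n. \<bar>\<Sum>S\<in>{S. S \<in> Pow {..<n} \<and> card S = k}. ?d S\<bar>)"
    by (simp add: tv_bin_def bin_pmf_eq_sum_bernoulli_prod sum_subtractf)
  also have "\<dots> \<le> (\<Sum>k\<le>n. \<Sum>S\<in>{S. S \<in> Pow {..<n} \<and> card S = k}. \<bar>?d S\<bar>)"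
    by (intro sum_mono sum_abs)
  also have "\<dots> = (\<Sum>S\<in>Pow {..<n}. \<bar>?d S\<bar>)"
    by (rule sum.group) (auto simp: card_mono[of "{..<n}", simplified])
  finally show ?thesis .
qed

lemma tv_bin_le_abs_diff:
  assumes "0 \<le> a" "a \<le> 1" "0 \<le> b" "b \<le> 1"
  shows "tv_bin n a b \<le> real n * \<bar>a - b\<bar>"
  using tv_bin_le_sum_abs_bernoulli_prod[of n a b]
    sum_abs_bernoulli_prod_diff_le[of "{..<n}" "\<lambda>_. a" "\<lambda>_. b"] assms
  by simp

lemma sum_bin_pmf: "(\<Sum>k\<le>n. bin_pmf n a k) = 1"
  using binomial_ring[of a "1 - a" n] by (simp add: bin_pmf_def)

lemma bin_pmf_nonneg: "0 \<le> a \<Longrightarrow> a \<le> 1 \<Longrightarrow> 0 \<le> bin_pmf n a k"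
  by (simp add: bin_pmf_def)

lemma tv_bin_le_1:
  assumes "0 \<le> a" "a \<le> 1" "0 \<le> b" "b \<le> 1"
  shows "tv_bin n a b \<le> 1"
proof -
  have "(\<Sum>k\<le>n. \<bar>bin_pmf n a k - bin_pmf n b k\<bar>) \<le> (\<Sum>k\<le>n. bin_pmf n a k + bin_pmf n b k)"
    using bin_pmf_nonneg[OF assms(1,2)] bin_pmf_nonneg[OF assms(3,4)]
    by (intro sum_mono) (simp add: abs_le_iff)
  then show ?thesis
    by (simp add: tv_bin_def sum.distrib sum_bin_pmf)
qed

lemma sqrt_bin_pmf_mult:
  "sqrt (bin_pmf n a k) * sqrt (bin_pmf n b k)
       = real (n choose k) * sqrt (a * b) ^ k * sqrt ((1 - a) * (1 - b)) ^ (n - k)"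
proof -
  have "bin_pmf n a k * bin_pmf n b k
      = (real (n choose k))^2 * (a * b) ^ k * ((1 - a) * (1 - b)) ^ (n - k)"
    unfolding power_mult_distrib by (simp add: bin_pmf_def power2_eq_square mult_ac)
  then have "sqrt (bin_pmf n a k * bin_pmf n b k)
      = sqrt ((real (n choose k))^2) * sqrt (a * b) ^ k * sqrt ((1 - a) * (1 - b)) ^ (n - k)"
    by (simp add: real_sqrt_mult real_sqrt_power)
  then show ?thesis
    by (simp add: real_sqrt_mult)
qed

lemma sum_abs_diff_sq_le_hellinger:
  fixes P Q :: "'a \<Rightarrow> real"
  assumes "\<And>x. x \<in> X \<Longrightarrow> 0 \<le> P x" "\<And>x. x \<in> X \<Longrightarrow> 0 \<le> Q x" "sum P X = 1" "sum Q X = 1"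
  shows "(\<Sum>x\<in>X. \<bar>P x - Q x\<bar>)^2 \<le> 8 * (1 - (\<Sum>x\<in>X. sqrt (P x) * sqrt (Q x)))"
proof -
  define \<beta> where "\<beta> = (\<Sum>x\<in>X. sqrt (P x) * sqrt (Q x))"
  have minus: "(\<Sum>x\<in>X. (sqrt (P x) - sqrt (Q x))^2) = 2 - 2 * \<beta>"
  proof -
    have "(\<Sum>x\<in>X. (sqrt (P x) - sqrt (Q x))^2) = (\<Sum>x\<in>X. P x + Q x - 2 * (sqrt (P x) * sqrt (Q x)))"
      using assms(1,2) by (intro sum.cong) (auto simp: power2_eq_square algebra_simps)
    then show ?thesis
      using assms(3,4) by (simp add: \<beta>_def sum_subtractf sum.distrib flip: sum_distrib_left)
  qed
  have plus: "(\<Sum>x\<in>X. (sqrt (P x) + sqrt (Q x))^2) = 2 + 2 * \<beta>"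
  proof -
    have "(\<Sum>x\<in>X. (sqrt (P x) + sqrt (Q x))^2) = (\<Sum>x\<in>X. P x + Q x + 2 * (sqrt (P x) * sqrt (Q x)))"
      using assms(1,2) by (intro sum.cong) (auto simp: power2_eq_square algebra_simps)
    then show ?thesis
      using assms(3,4) by (simp add: \<beta>_def sum.distrib flip: sum_distrib_left)
  qed
  have "\<bar>P x - Q x\<bar> = \<bar>sqrt (P x) - sqrt (Q x)\<bar> * (sqrt (P x) + sqrt (Q x))" if "x \<in> X" for x
  proof -
    have "P x - Q x = (sqrt (P x) - sqrt (Q x)) * (sqrt (P x) + sqrt (Q x))"
      using assms(1,2) that by (simp add: algebra_simps)
    then show ?thesis
      using assms(1,2) that by (simp add: abs_mult)
  qed
  then have "(\<Sum>x\<in>X. \<bar>P x - Q x\<bar>)^2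
      = (\<Sum>x\<in>X. \<bar>sqrt (P x) - sqrt (Q x)\<bar> * (sqrt (P x) + sqrt (Q x)))^2"
    by (simp cong: sum.cong)
  also have "\<dots> \<le> (\<Sum>x\<in>X. \<bar>sqrt (P x) - sqrt (Q x)\<bar>^2) * (\<Sum>x\<in>X. (sqrt (P x) + sqrt (Q x))^2)"
    by (rule Cauchy_Schwarz_ineq_sum)
  also have "\<dots> = (2 - 2 * \<beta>) * (2 + 2 * \<beta>)"
    by (simp add: minus plus)
  also have "\<dots> \<le> 8 * (1 - \<beta>)"
    using zero_le_power2[of "1 - \<beta>"] by (simp add: algebra_simps power2_eq_square)
  finally show ?thesis
    by (simp add: \<beta>_def)
qed

lemma bernoulli_hellinger_mult_var_le:
  assumes "0 \<le> a" "a \<le> 1" "0 \<le> b" "b \<le> 1"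
  shows "(1 - (sqrt (a * b) + sqrt ((1 - a) * (1 - b)))) * (a * (1 - a) + b * (1 - b)) \<le> (a - b)^2"
proof -
  define \<beta> where "\<beta> = sqrt (a * b) + sqrt ((1 - a) * (1 - b))"
  define V where "V = a * (1 - a) + b * (1 - b)"
  define x y u z where "x = sqrt a" "y = sqrt b" "u = sqrt (1 - a)" "z = sqrt (1 - b)"
  have pos: "0 \<le> x" "0 \<le> y" "0 \<le> u" "0 \<le> z"
    using assms by (auto simp: x_y_u_z_def)
  have sq: "x^2 = a" "y^2 = b" "u^2 = 1 - a" "z^2 = 1 - b"
    using assms by (auto simp: x_y_u_z_def)
  have "(x - y)^2 * (x + y)^2 = (x^2 - y^2)^2" "(u - z)^2 * (u + z)^2 = (z^2 - u^2)^2"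
    by (simp_all add: power2_eq_square algebra_simps)
  then have ab: "(a - b)^2 = (x - y)^2 * (x + y)^2" "(a - b)^2 = (u - z)^2 * (u + z)^2"
    using sq by simp_all
  have "(x - y)^2 * x^2 \<le> (a - b)^2" "(x - y)^2 * y^2 \<le> (a - b)^2"
    unfolding ab(1) using pos by (auto intro!: mult_left_mono power_mono)
  moreover have "(u - z)^2 * u^2 \<le> (a - b)^2" "(u - z)^2 * z^2 \<le> (a - b)^2"
    unfolding ab(2) using pos by (auto intro!: mult_left_mono power_mono)
  moreover have "((x - y)^2 + (u - z)^2) * (x^2 * u^2 + y^2 * z^2)
      = (x - y)^2 * x^2 * u^2 + (u - z)^2 * u^2 * x^2 + (x - y)^2 * y^2 * z^2 + (u - z)^2 * z^2 * y^2"
    by (simp add: algebra_simps)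
  ultimately have "((x - y)^2 + (u - z)^2) * (x^2 * u^2 + y^2 * z^2)
      \<le> (a - b)^2 * u^2 + (a - b)^2 * x^2 + (a - b)^2 * z^2 + (a - b)^2 * y^2"
    by (simp only:) (intro add_mono mult_right_mono; simp)
  also have "\<dots> = (a - b)^2 * ((x^2 + u^2) + (y^2 + z^2))"
    by (simp add: algebra_simps)
  also have "\<dots> = 2 * (a - b)^2"
    using sq by simp
  finally have main: "((x - y)^2 + (u - z)^2) * (x^2 * u^2 + y^2 * z^2) \<le> 2 * (a - b)^2" .
  have "\<beta> = x * y + u * z"
    by (simp add: \<beta>_def x_y_u_z_def real_sqrt_mult)
  then have "(x - y)^2 + (u - z)^2 = 2 * (1 - \<beta>)"
    using sq by (simp add: power2_eq_square algebra_simps)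
  moreover have "x^2 * u^2 + y^2 * z^2 = V"
    using sq by (simp add: V_def)
  ultimately have "2 * (1 - \<beta>) * V \<le> 2 * (a - b)^2"
    using main by simp
  then show ?thesis
    unfolding \<beta>_def[symmetric] V_def[symmetric] by linarith
qed

lemma tv_bin_sq_mult_var_le:
  assumes "0 \<le> a" "a \<le> 1" "0 \<le> b" "b \<le> 1"
  shows "(tv_bin n a b)^2 * (real n * (a * (1 - a) + b * (1 - b))) \<le> 2 * (real n * (a - b))^2"
proof -
  define \<beta> where "\<beta> = sqrt (a * b) + sqrt ((1 - a) * (1 - b))"
  define V where "V = a * (1 - a) + b * (1 - b)"
  have \<beta>_nonneg: "0 \<le> \<beta>"
    using assms by (simp add: \<beta>_def)
  have "(\<Sum>k\<le>n. sqrt (bin_pmf n a k) * sqrt (bin_pmf n b k)) = \<beta> ^ n"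
    using binomial_ring[of "sqrt (a * b)" "sqrt ((1 - a) * (1 - b))" n]
    by (simp add: sqrt_bin_pmf_mult \<beta>_def)
  then have "(2 * tv_bin n a b)^2 \<le> 8 * (1 - \<beta> ^ n)"
    using sum_abs_diff_sq_le_hellinger[of "{..n}" "bin_pmf n a" "bin_pmf n b"] assms
    by (simp add: tv_bin_def bin_pmf_nonneg sum_bin_pmf)
  moreover have "1 - \<beta> ^ n \<le> real n * (1 - \<beta>)"
    using Bernoulli_inequality[of "\<beta> - 1" n] \<beta>_nonneg by (simp add: algebra_simps)
  ultimately have "(tv_bin n a b)^2 \<le> 2 * real n * (1 - \<beta>)"
    by (simp add: power_mult_distrib)
  then have "(tv_bin n a b)^2 * (real n * V) \<le> 2 * real n * (1 - \<beta>) * (real n * V)"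
    using assms by (intro mult_right_mono) (simp_all add: V_def)
  also have "\<dots> = 2 * real n * real n * ((1 - \<beta>) * V)"
    by (simp add: algebra_simps)
  also have "\<dots> \<le> 2 * real n * real n * (a - b)^2"
    using bernoulli_hellinger_mult_var_le[OF assms] by (intro mult_left_mono) (simp_all add: \<beta>_def V_def)
  finally show ?thesis
    by (simp add: V_def power2_eq_square mult_ac)
qed

lemma tv_bin_mult_sqrt_var_le:
  assumes "0 \<le> a" "a \<le> 1" "0 \<le> b" "b \<le> 1"
  shows "tv_bin n a b * sqrt (real n * (a * (1 - a) + b * (1 - b))) \<le> 3 / 2 * (real n * \<bar>a - b\<bar>)"
proof (rule power2_le_imp_le)
  have "(tv_bin n a b * sqrt (real n * (a * (1 - a) + b * (1 - b))))^2 \<le> 2 * (real n * (a - b))^2"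
    using tv_bin_sq_mult_var_le[OF assms, of n] assms by (simp add: power_mult_distrib)
  also have "\<dots> \<le> 9 / 4 * (real n * (a - b))^2"
    by simp
  also have "\<dots> = (3 / 2 * (real n * \<bar>a - b\<bar>))^2"
    by (simp add: power2_eq_square abs_mult_self_eq field_simps)
  finally show "(tv_bin n a b * sqrt (real n * (a * (1 - a) + b * (1 - b))))^2
      \<le> (3 / 2 * (real n * \<bar>a - b\<bar>))^2" .
qed simp

lemma poibin_var_le_mean_var:
  "poibin_var n p \<le> real n * ((\<Sum>i<n. p i) / real n * (1 - (\<Sum>i<n. p i) / real n))"
proof (cases "n = 0")
  case True
  then show ?thesis by (simp add: poibin_var_def)
next
  case False
  define P where "P = (\<Sum>i<n. p i)"
  have "P^2 \<le> (\<Sum>i<n. (p i)^2) * real n"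
    using sum_squared_le_sum_of_squares[of p "{..<n}"] by (simp add: P_def)
  moreover have "poibin_var n p = P - (\<Sum>i<n. (p i)^2)"
    by (simp add: poibin_var_def P_def algebra_simps power2_eq_square sum_subtractf)
  ultimately have "real n * poibin_var n p \<le> real n * P - P^2"
    by (simp add: right_diff_distrib mult.commute)
  then have "poibin_var n p \<le> P - P^2 / real n"
    using False by (simp add: field_simps)
  also have "\<dots> = real n * (P / real n * (1 - P / real n))"
    using False by (simp add: field_simps power2_eq_square)
  finally show ?thesis
    by (simp add: P_def)
qed

lemma mean_in_unit_interval:
  fixes p :: "nat \<Rightarrow> real"
  assumes "\<forall>i<n. 0 \<le> p i \<and> p i \<le> 1"
  shows "0 \<le> (\<Sum>i<n. p i) / real n" "(\<Sum>i<n. p i) / real n \<le> 1"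
proof -
  have "0 \<le> (\<Sum>i<n. p i)" "(\<Sum>i<n. p i) \<le> real n"
    using assms sum_mono[of "{..<n}" p "\<lambda>_. 1"] by (auto intro: sum_nonneg)
  then show "0 \<le> (\<Sum>i<n. p i) / real n" "(\<Sum>i<n. p i) / real n \<le> 1"
    by (auto simp: divide_le_eq_1)
qed

lemma tv_bin_mean_le_28_tv_ber:
  fixes p q :: "nat \<Rightarrow> real"
  assumes p: "\<forall>i<n. 0 \<le> p i \<and> p i \<le> 1" and q: "\<forall>i<n. 0 \<le> q i \<and> q i \<le> 1"
  shows "tv_bin n ((\<Sum>i<n. p i) / real n) ((\<Sum>i<n. q i) / real n) \<le> 28 * tv_ber n p q"
proof -
  define a b where "a = (\<Sum>i<n. p i) / real n" and "b = (\<Sum>i<n. q i) / real n"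
  define B where "B = tv_bin n a b"
  define D where "D = (\<Sum>i<n. \<bar>p i - q i\<bar>)"
  define s where "s = sqrt (real n * (a * (1 - a) + b * (1 - b)))"
  have a: "0 \<le> a" "a \<le> 1" and b: "0 \<le> b" "b \<le> 1"
    using mean_in_unit_interval[OF p] mean_in_unit_interval[OF q] by (simp_all add: a_def b_def)
  then have s: "0 \<le> s" "s^2 = real n * (a * (1 - a) + b * (1 - b))"
    by (simp_all add: s_def)
  have "real n * (a - b) = (\<Sum>i<n. p i - q i)"
    by (cases "n = 0") (simp_all add: a_def b_def sum_subtractf field_simps)
  then have D: "0 \<le> D" "\<bar>real n * (a - b)\<bar> \<le> D"
    by (simp_all add: D_def sum_abs sum_nonneg)
  have "poibin_var n p + poibin_var n q \<le> s^2"
    using poibin_var_le_mean_var[of n p] poibin_var_le_mean_var[of n q] s(2)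
    by (simp add: a_def b_def algebra_simps)
  then have lower: "D \<le> 4 * (3 + 2 * s + D) * tv_ber n p q"
    using sum_abs_diff_le_tv_ber[OF p q s(1)] by (simp add: D_def)
  have B: "0 \<le> B" "B \<le> 1" "B \<le> D"
    using tv_bin_le_1[OF a b] tv_bin_le_abs_diff[OF a b, of n] D
    by (auto simp: B_def tv_bin_def sum_nonneg abs_mult)
  have Bs: "B * s \<le> 3 / 2 * D"
    using tv_bin_mult_sqrt_var_le[OF a b, of n] D(2) by (simp add: B_def s_def abs_mult)
  define L where "L = 4 * (3 + 2 * s + D)"
  have "B * L = 12 * B + 8 * (B * s) + 4 * (B * D)"
    by (simp add: L_def algebra_simps)
  also have "\<dots> \<le> 28 * D"
    using B Bs mult_right_mono[OF B(2) D(1)] by linarith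
  also have "\<dots> \<le> 28 * (L * tv_ber n p q)"
    using lower unfolding L_def by simp
  also have "\<dots> = 28 * tv_ber n p q * L"
    by (simp add: algebra_simps)
  finally have "B \<le> 28 * tv_ber n p q"
    by (rule mult_right_le_imp_le) (use s(1) D(1) in \<open>simp add: L_def\<close>)
  then show ?thesis
    by (simp only: B_def a_def b_def)
qed

theorem theorem5:
  fixes n :: nat and p q :: "nat \<Rightarrow> real"
  assumes "n \<ge> 1"
    and "\<forall>i<n. 0 \<le> p i \<and> p i \<le> 1"
    and "\<forall>i<n. 0 \<le> q i \<and> q i \<le> 1"
  shows "tv_ber n p q \<ge> (1 / (48 * C_BCV)) *
           tv_bin n ((\<Sum>i<n. p i) / real n) ((\<Sum>i<n. q i) / real n)"
proof -
  have "1 \<le> 5 / 4 + eta_BCV^2"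
    using zero_le_power2[of eta_BCV] by linarith
  then have C: "1 \<le> C_BCV"
    by (simp add: C_BCV_def)
  moreover have "0 \<le> tv_ber n p q"
    by (simp add: tv_ber_def sum_nonneg)
  ultimately have "28 * tv_ber n p q \<le> 48 * C_BCV * tv_ber n p q"
    by (intro mult_right_mono) auto
  with tv_bin_mean_le_28_tv_ber[OF assms(2,3)] C show ?thesis
    by (simp add: field_simps)
qed

end
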